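(* Let $L$ be a Lie algebra over a field $F$ generated by elements $a_1,\dots,a_m$ such that every element of the Lie set $S\langle a_1,\dots,a_m\rangle$ is ad-nilpotent. Let $I$ be an ideal of $L$ of finite codimension. Then $I$ is finitely generated as a Lie algebra.
   Context: An element $a\in L$ is ad-nilpotent if $\operatorname{ad}(a):x\mapsto[x,a]$ is a nilpotent operator on $L$. $S\langle a_1,\dots,a_m\rangle$ is the smallest subset of $L$ containing $a_1,\dots,a_m$ and closed under the bracket, i.e. the set of the $a_i$ and all iterated commutators in them. *)

theory Defs
  imports Main "HOL.Vector_Spaces"
begin

text \<open>A Lie algebra over a field: the whole type 'a is the underlying vector space
(with scalar multiplication scale over the field 'f) and br is the Lie bracket.\<close>

locale lie_algebra = vector_space scale
  for scale :: "'f::field \<Rightarrow> 'a::ab_group_add \<Rightarrow> 'a" +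
  fixes br :: "'a \<Rightarrow> 'a \<Rightarrow> 'a"
  assumes br_add_left: "br (x + y) z = br x z + br y z"
    and br_add_right: "br x (y + z) = br x y + br x z"
    and br_scale_left: "br (scale c x) y = scale c (br x y)"
    and br_scale_right: "br x (scale c y) = scale c (br x y)"
    and br_alt: "br x x = 0"
    and jacobi: "br x (br y z) + br y (br z x) + br z (br x y) = 0"

definition ad_nilpotent :: "('a \<Rightarrow> 'a \<Rightarrow> 'a) \<Rightarrow> 'a::zero \<Rightarrow> bool" where
  "ad_nilpotent br a \<longleftrightarrow> (\<exists>n. \<forall>x. ((\<lambda>y. br y a) ^^ n) x = 0)"

inductive_set lie_set :: "('a \<Rightarrow> 'a \<Rightarrow> 'a) \<Rightarrow> 'a set \<Rightarrow> 'a set"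
  for br :: "'a \<Rightarrow> 'a \<Rightarrow> 'a" and A :: "'a set" where
  gen: "a \<in> A \<Longrightarrow> a \<in> lie_set br A"
| brk: "x \<in> lie_set br A \<Longrightarrow> y \<in> lie_set br A \<Longrightarrow> br x y \<in> lie_set br A"

definition lie_subalg :: "('f::field \<Rightarrow> 'a::ab_group_add \<Rightarrow> 'a) \<Rightarrow> ('a \<Rightarrow> 'a \<Rightarrow> 'a) \<Rightarrow> 'a set \<Rightarrow> 'a set" where
  "lie_subalg scale br A =
     \<Inter>{S. A \<subseteq> S \<and> module.subspace scale S \<and> (\<forall>x\<in>S. \<forall>y\<in>S. br x y \<in> S)}"

definition lie_ideal :: "('f::field \<Rightarrow> 'a::ab_group_add \<Rightarrow> 'a) \<Rightarrow> ('a \<Rightarrow> 'a \<Rightarrow> 'a) \<Rightarrow> 'a set \<Rightarrow> bool" where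
  "lie_ideal scale br I \<longleftrightarrow> module.subspace scale I \<and> (\<forall>x\<in>I. \<forall>a. br x a \<in> I)"

text \<open>I has finite codimension: L/I is finite dimensional, i.e. finitely many
vectors together with I span L.\<close>
definition finite_codim :: "('f::field \<Rightarrow> 'a::ab_group_add \<Rightarrow> 'a) \<Rightarrow> 'a set \<Rightarrow> bool" where
  "finite_codim scale I \<longleftrightarrow> (\<exists>B. finite B \<and> module.span scale (I \<union> B) = UNIV)"

end

theory Submission
  imports Defs
begin

text \<open>Choose finitely many elements \<open>B\<close> of the Lie set spanning \<open>L\<close> modulo \<open>I\<close>, a
projection \<open>p\<close> onto \<open>I\<close> along \<open>span B\<close>, and exponents \<open>n b\<close> with \<open>ad(b)^(n b) = 0\<close>.
Let \<open>X\<close> consist of the \<open>p\<close>-images of the generators and of the brackets \<open>[b,b']\<close>, and let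
\<open>M\<close> be generated by the finitely many \<open>[x,b\<^sub>1,\<dots>,b\<^sub>k] = ad_word x [b\<^sub>1,\<dots>,b\<^sub>k]\<close> with
\<open>x \<in> X\<close> and \<open>k \<le> \<Sum>b. n b\<close>. By the Jacobi identity and \<open>[b,b'] \<in> X + span B\<close>, swapping
two adjacent letters changes \<open>[x,b\<^sub>1,\<dots>,b\<^sub>k]\<close> only by elements built from shorter words; a
long word contains some \<open>b\<close> at least \<open>n b\<close> times, and moving these copies to the end
yields \<open>0\<close>. So all such commutators lie in \<open>M\<close>, hence \<open>M\<close> is stable under \<open>ad(span B)\<close>,
and \<open>M + span B\<close> is a subalgebra containing the generators, i.e. everything. Thus
\<open>I = M + (I \<inter> span B)\<close>, and a basis of the finite-dimensional \<open>I \<inter> span B\<close> completes the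
generators of \<open>M\<close> to a finite generating set of \<open>I\<close>.\<close>

lemma pigeonhole_count_list:
  assumes "finite B" "set w \<subseteq> B" "sum f B < length w"
  shows "\<exists>s\<in>B. f s < count_list w s"
proof (rule ccontr)
  assume "\<not> ?thesis"
  then have "sum (count_list w) B \<le> sum f B" by (intro sum_mono) auto
  then show False using sum_count_set[OF assms(2,1)] assms(3) by simp
qed

context lie_algebra
begin

lemma br_zero_left [simp]: "br 0 y = 0"
  using br_scale_left[of 0 0 y] by simp

lemma br_zero_right [simp]: "br y 0 = 0"
  using br_scale_right[of y 0 0] by simp

lemma br_neg_left: "br (- x) y = - br x y"
  using br_add_left[of x "- x" y] by (simp add: eq_neg_iff_add_eq_0 add.commute)

lemma br_diff_left: "br (x - y) z = br x z - br y z"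
  using br_add_left[of x "- y" z] by (simp add: br_neg_left)

lemma br_anticomm: "br x y = - br y x"
proof -
  have "br x y + br y x = br (x + y) (x + y)"
    unfolding br_add_left br_add_right by (simp add: br_alt)
  then have "br x y + br y x = 0"
    by (simp add: br_alt)
  then show ?thesis by (simp add: eq_neg_iff_add_eq_0)
qed

lemma br_leibniz: "br (br x y) s = br (br x s) y + br x (br y s)"
  using jacobi[of x y s] br_anticomm[of s "br x y"] br_anticomm[of y "br s x"] br_anticomm[of s x]
  by (simp add: br_neg_left algebra_simps)

lemma br_commutator_right: "br (br z a) b - br (br z b) a = br z (br a b)"
  using br_leibniz[of z a b] by (simp add: algebra_simps)

lemma subspace_br_left_vimage: "subspace V \<Longrightarrow> subspace {x. br x b \<in> V}"
  unfolding subspace_def by (simp add: br_add_left br_scale_left)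

lemma subspace_br_right_vimage: "subspace V \<Longrightarrow> subspace {x. br b x \<in> V}"
  unfolding subspace_def by (simp add: br_add_right br_scale_right)

lemma br_span_mem:
  assumes V: "subspace V" and PQ: "\<And>a b. a \<in> P \<Longrightarrow> b \<in> Q \<Longrightarrow> br a b \<in> V"
    and x: "x \<in> span P" and y: "y \<in> span Q"
  shows "br x y \<in> V"
proof -
  have "br x b \<in> V" if "b \<in> Q" for b
    using span_minimal[OF _ subspace_br_left_vimage[OF V, of b]] PQ that x by blast
  then show ?thesis
    using span_minimal[OF _ subspace_br_right_vimage[OF V, of x]] y by blast
qed

definition ad_word :: "'a \<Rightarrow> 'a list \<Rightarrow> 'a" where
  "ad_word z w = foldl br z w"

lemma ad_word_simps [simp]:
  "ad_word z [] = z"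
  "ad_word z (s # w) = ad_word (br z s) w"
  "ad_word z (u @ v) = ad_word (ad_word z u) v"
  by (simp_all add: ad_word_def)

lemma ad_word_zero [simp]: "ad_word 0 w = 0"
  by (induction w) simp_all

lemma ad_word_add: "ad_word (z1 + z2) w = ad_word z1 w + ad_word z2 w"
  by (induction w arbitrary: z1 z2) (simp_all add: br_add_left)

lemma ad_word_scale: "ad_word (scale c z) w = scale c (ad_word z w)"
  by (induction w arbitrary: z) (simp_all add: br_scale_left)

lemma ad_word_diff: "ad_word (z1 - z2) w = ad_word z1 w - ad_word z2 w"
  by (induction w arbitrary: z1 z2) (simp_all add: br_diff_left)

lemma ad_word_replicate: "ad_word z (replicate n s) = ((\<lambda>y. br y s) ^^ n) z"
  by (induction n arbitrary: z) (simp_all add: funpow_Suc_right del: funpow.simps)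

lemma lie_ideal_ad_word_mem: "lie_ideal scale br I \<Longrightarrow> x \<in> I \<Longrightarrow> ad_word x w \<in> I"
  unfolding lie_ideal_def by (induction w arbitrary: x) auto

definition subalgebra :: "'a set \<Rightarrow> bool" where
  "subalgebra S \<longleftrightarrow> subspace S \<and> (\<forall>x\<in>S. \<forall>y\<in>S. br x y \<in> S)"

lemma subalgebra_subspace: "subalgebra S \<Longrightarrow> subspace S"
  unfolding subalgebra_def by blast

lemma subalgebra_br: "subalgebra S \<Longrightarrow> x \<in> S \<Longrightarrow> y \<in> S \<Longrightarrow> br x y \<in> S"
  unfolding subalgebra_def by blast

lemma lie_ideal_subalgebra: "lie_ideal scale br I \<Longrightarrow> subalgebra I"
  unfolding lie_ideal_def subalgebra_def by blast

lemma lie_subalg_least: "G \<subseteq> S \<Longrightarrow> subalgebra S \<Longrightarrow> lie_subalg scale br G \<subseteq> S"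
  unfolding lie_subalg_def subalgebra_def by blast

lemma lie_subalg_superset: "G \<subseteq> lie_subalg scale br G"
  unfolding lie_subalg_def by blast

lemma subalgebra_lie_subalg: "subalgebra (lie_subalg scale br G)"
proof -
  let ?F = "{S. G \<subseteq> S \<and> subspace S \<and> (\<forall>x\<in>S. \<forall>y\<in>S. br x y \<in> S)}"
  have "subspace (\<Inter>?F)" by (rule subspace_Inter) blast
  moreover have "\<forall>x\<in>\<Inter>?F. \<forall>y\<in>\<Inter>?F. br x y \<in> \<Inter>?F" by blast
  ultimately show ?thesis unfolding subalgebra_def lie_subalg_def by (simp only:)
qed

lemma lie_subalg_mono: "G \<subseteq> H \<Longrightarrow> lie_subalg scale br G \<subseteq> lie_subalg scale br H"
  by (meson lie_subalg_least lie_subalg_superset subalgebra_lie_subalg order_trans)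

lemma lie_subalg_subset_span_lie_set: "lie_subalg scale br A \<subseteq> span (lie_set br A)"
proof (rule lie_subalg_least)
  show "A \<subseteq> span (lie_set br A)"
    by (rule subsetI, rule span_base, rule lie_set.gen)
  show "subalgebra (span (lie_set br A))"
    unfolding subalgebra_def
  proof (intro conjI ballI)
    fix x y assume "x \<in> span (lie_set br A)" "y \<in> span (lie_set br A)"
    then show "br x y \<in> span (lie_set br A)"
      by (rule br_span_mem[OF subspace_span, rotated]) (rule span_base, rule lie_set.brk)
  qed simp
qed

lemma lie_subalg_br_right_closed:
  assumes Y: "\<And>y. y \<in> Y \<Longrightarrow> br y s \<in> lie_subalg scale br Y"
    and z: "z \<in> lie_subalg scale br Y"
  shows "br z s \<in> lie_subalg scale br Y"
proof -
  let ?M = "lie_subalg scale br Y"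
  have M: "subalgebra ?M" by (rule subalgebra_lie_subalg)
  have "subalgebra {z \<in> ?M. br z s \<in> ?M}"
    unfolding subalgebra_def
  proof (intro conjI ballI)
    show "subspace {z \<in> ?M. br z s \<in> ?M}"
      using subspace_inter[OF subalgebra_subspace[OF M] subspace_br_left_vimage[OF subalgebra_subspace[OF M]]]
      by (simp only: Int_def mem_Collect_eq)
    fix x y assume "x \<in> {z \<in> ?M. br z s \<in> ?M}" "y \<in> {z \<in> ?M. br z s \<in> ?M}"
    then have "x \<in> ?M" "y \<in> ?M" "br x s \<in> ?M" "br y s \<in> ?M" by auto
    then have "br x y \<in> ?M" "br (br x s) y + br x (br y s) \<in> ?M"
      by (blast intro: subalgebra_br[OF M] subspace_add[OF subalgebra_subspace[OF M]])+
    then show "br x y \<in> {z \<in> ?M. br z s \<in> ?M}"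
      using br_leibniz[of x y s] by simp
  qed
  moreover have "Y \<subseteq> {z \<in> ?M. br z s \<in> ?M}"
    using Y lie_subalg_superset[of Y] by blast
  ultimately have "?M \<subseteq> {z \<in> ?M. br z s \<in> ?M}"
    by (intro lie_subalg_least)
  then show ?thesis using z by blast
qed

lemma lie_subalg_br_span_closed:
  assumes "\<And>y s. y \<in> Y \<Longrightarrow> s \<in> S \<Longrightarrow> br y s \<in> lie_subalg scale br Y"
    and z: "z \<in> lie_subalg scale br Y" and q: "q \<in> span S"
  shows "br z q \<in> lie_subalg scale br Y"
proof -
  have "S \<subseteq> {q. br z q \<in> lie_subalg scale br Y}"
    using lie_subalg_br_right_closed assms(1) z by blast
  then show ?thesis
    using span_minimal[OF _ subspace_br_right_vimage[OF subalgebra_subspace[OF subalgebra_lie_subalg]]] q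
    by blast
qed

lemma ad_word_br_mem:
  assumes M: "subalgebra M" and "set v \<subseteq> D" "length v \<le> n"
    and "\<And>u. set u \<subseteq> D \<Longrightarrow> length u \<le> n \<Longrightarrow> ad_word z1 u \<in> M"
    and "\<And>u. set u \<subseteq> D \<Longrightarrow> length u \<le> n \<Longrightarrow> ad_word z2 u \<in> M"
  shows "ad_word (br z1 z2) v \<in> M"
  using assms(2-)
proof (induction v arbitrary: z1 z2 n)
  case Nil
  then show ?case using Nil.prems(3,4)[of "[]"] subalgebra_br[OF M] by simp
next
  case (Cons s v)
  then obtain m where n: "n = Suc m" and s: "s \<in> D" by (cases n) auto
  have "ad_word (br (br z1 s) z2) v \<in> M"
    using Cons.prems(3)[of "s # _"] Cons.prems(4)
    by (intro Cons.IH[of m]) (use Cons.prems n s in auto)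
  moreover have "ad_word (br z1 (br z2 s)) v \<in> M"
    using Cons.prems(3) Cons.prems(4)[of "s # _"]
    by (intro Cons.IH[of m]) (use Cons.prems n s in auto)
  ultimately show ?case
    using subspace_add[OF subalgebra_subspace[OF M]] by (simp add: br_leibniz[of z1 z2 s] ad_word_add)
qed

context
  fixes M X B :: "'a set"
  assumes subalgebra_M: "subalgebra M"
    and br_decomp: "\<And>a b. a \<in> B \<Longrightarrow> b \<in> B \<Longrightarrow> \<exists>p\<in>X. br a b - p \<in> span B"
begin

text \<open>The induction hypothesis of \<open>ad_words_mem\<close>, on the length of the word.\<close>

context
  fixes n :: nat
  assumes shorter: "\<And>x w. x \<in> X \<Longrightarrow> set w \<subseteq> B \<Longrightarrow> length w < n \<Longrightarrow> ad_word x w \<in> M"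
begin

lemma ad_word_swap_mem:
  assumes x: "x \<in> X" and w: "set (u @ a # b # v) \<subseteq> B" and n: "length (u @ a # b # v) = n"
  shows "ad_word x (u @ a # b # v) - ad_word x (u @ b # a # v) \<in> M"
proof -
  have MS: "subspace M" by (rule subalgebra_subspace[OF subalgebra_M])
  define z where "z = ad_word x u"
  have "a \<in> B" "b \<in> B" using w by auto
  then obtain p where p: "p \<in> X" "br a b - p \<in> span B" using br_decomp by blast
  have "ad_word x (u @ a # b # v) - ad_word x (u @ b # a # v) = ad_word (br (br z a) b - br (br z b) a) v"
    by (simp add: z_def ad_word_diff)
  also have "\<dots> = ad_word (br z (br a b)) v"
    by (simp add: br_commutator_right)
  also have "\<dots> = ad_word (br z p) v + ad_word (br z (br a b - p)) v"
    by (simp add: ad_word_add[symmetric] br_add_right[symmetric])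
  also have "\<dots> \<in> M"
  proof (rule subspace_add[OF MS])
    show "ad_word (br z p) v \<in> M"
    proof (rule ad_word_br_mem[OF subalgebra_M, of v B "length v"])
      show "set v \<subseteq> B" using w by auto
      show "ad_word z u' \<in> M" if "set u' \<subseteq> B" "length u' \<le> length v" for u'
        using shorter[OF x, of "u @ u'"] that w n by (simp add: z_def)
      show "ad_word p u' \<in> M" if "set u' \<subseteq> B" "length u' \<le> length v" for u'
        using shorter[OF p(1) that(1)] that n by simp
    qed simp
    have "subspace {q. ad_word (br z q) v \<in> M}"
      using MS unfolding subspace_def by (simp add: br_add_right br_scale_right ad_word_add ad_word_scale)
    moreover have "B \<subseteq> {q. ad_word (br z q) v \<in> M}"
      using shorter[OF x, of "u @ _ # v"] w n by (auto simp: z_def)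
    ultimately show "ad_word (br z (br a b - p)) v \<in> M"
      using span_minimal p(2) by blast
  qed
  finally show ?thesis .
qed

lemma ad_word_move_last_mem:
  assumes x: "x \<in> X" and "set (u @ a # v) \<subseteq> B" "length (u @ a # v) = n"
  shows "ad_word x (u @ a # v) - ad_word x (u @ v @ [a]) \<in> M"
  using assms(2,3)
proof (induction v arbitrary: u)
  case Nil
  then show ?case using subspace_0[OF subalgebra_subspace[OF subalgebra_M]] by simp
next
  case (Cons b v)
  have "ad_word x (u @ a # b # v) - ad_word x (u @ b # a # v) \<in> M"
    using ad_word_swap_mem[OF x] Cons.prems by blast
  moreover have "ad_word x ((u @ [b]) @ a # v) - ad_word x ((u @ [b]) @ v @ [a]) \<in> M"
    using Cons.IH[of "u @ [b]"] Cons.prems by auto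
  ultimately show ?case
    using subspace_add[OF subalgebra_subspace[OF subalgebra_M]] by fastforce
qed

lemma ad_word_gather_mem:
  assumes x: "x \<in> X" and w: "set w \<subseteq> B" "length w = n" and c: "c \<le> count_list w s"
  shows "\<exists>w'. set w' \<subseteq> B \<and> length w' + c = n \<and> count_list w' s + c = count_list w s
    \<and> ad_word x w - ad_word x (w' @ replicate c s) \<in> M"
  using c
proof (induction c)
  case 0
  then show ?case using w subspace_0[OF subalgebra_subspace[OF subalgebra_M]] by auto
next
  case (Suc c)
  then obtain w' where w': "set w' \<subseteq> B" "length w' + c = n" "count_list w' s + c = count_list w s"
    and diff: "ad_word x w - ad_word x (w' @ replicate c s) \<in> M"
    by auto
  have "s \<in> set w'" using w'(3) Suc.prems count_notin by fastforce
  then obtain u v where w'_split: "w' = u @ s # v" by (meson split_list)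
  have "set (replicate c s) \<subseteq> B" using w'(1) \<open>s \<in> set w'\<close> by auto
  then have move: "ad_word x (u @ s # v @ replicate c s) - ad_word x (u @ (v @ replicate c s) @ [s]) \<in> M"
    using ad_word_move_last_mem[OF x, of u s "v @ replicate c s"] w' w'_split by auto
  have "ad_word x w - ad_word x ((u @ v) @ replicate (Suc c) s) =
      (ad_word x w - ad_word x (w' @ replicate c s))
      + (ad_word x (u @ s # v @ replicate c s) - ad_word x (u @ (v @ replicate c s) @ [s]))"
    using w'_split by (simp add: replicate_append_same)
  then have "ad_word x w - ad_word x ((u @ v) @ replicate (Suc c) s) \<in> M"
    using subspace_add[OF subalgebra_subspace[OF subalgebra_M] diff move] by (simp only:)
  then show ?case using w' w'_split by (intro exI[of _ "u @ v"]) auto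
qed

end

lemma ad_words_mem:
  assumes "finite B"
    and nilpotent: "\<And>s z. s \<in> B \<Longrightarrow> ((\<lambda>y. br y s) ^^ nn s) z = 0"
    and short: "\<And>x w. x \<in> X \<Longrightarrow> set w \<subseteq> B \<Longrightarrow> length w \<le> sum nn B \<Longrightarrow> ad_word x w \<in> M"
    and "x \<in> X" "set w \<subseteq> B"
  shows "ad_word x w \<in> M"
  using assms(4,5)
proof (induction "length w" arbitrary: x w rule: less_induct)
  case less
  show ?case
  proof (cases "length w \<le> sum nn B")
    case True
    then show ?thesis using short less.prems by blast
  next
    case False
    then obtain s where s: "s \<in> B" "nn s \<le> count_list w s"
      using pigeonhole_count_list[OF \<open>finite B\<close> less.prems(2), of nn] by force
    obtain w' where "ad_word x w - ad_word x (w' @ replicate (nn s) s) \<in> M"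
      using ad_word_gather_mem[OF _ less.prems refl s(2)] less.hyps by blast
    moreover have "ad_word x (w' @ replicate (nn s) s) = 0"
      using nilpotent[OF s(1)] by (simp add: ad_word_replicate)
    ultimately show ?thesis by simp
  qed
qed

end

lemma subalgebra_plus_subspace:
  assumes M: "subalgebra M" and Q: "subspace Q"
    and MQ: "\<And>m q. m \<in> M \<Longrightarrow> q \<in> Q \<Longrightarrow> br m q \<in> M"
    and QQ: "\<And>q q'. q \<in> Q \<Longrightarrow> q' \<in> Q \<Longrightarrow> br q q' \<in> {m + q | m q. m \<in> M \<and> q \<in> Q}"
  shows "subalgebra {m + q | m q. m \<in> M \<and> q \<in> Q}"
  unfolding subalgebra_def
proof (intro conjI ballI)
  let ?V = "{m + q | m q. m \<in> M \<and> q \<in> Q}"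
  have MS: "subspace M" by (rule subalgebra_subspace[OF M])
  show VS: "subspace ?V" by (rule subspace_sums[OF MS Q])
  fix x y assume "x \<in> ?V" "y \<in> ?V"
  then obtain m1 q1 m2 q2 where x: "x = m1 + q1" and y: "y = m2 + q2"
    and m: "m1 \<in> M" "m2 \<in> M" and q: "q1 \<in> Q" "q2 \<in> Q" by blast
  have "br x y = (br m1 m2 + br m1 q2 - br m2 q1) + br q1 q2"
    unfolding x y br_add_left br_add_right using br_anticomm[of q1 m2] by (simp add: algebra_simps)
  moreover have "br m1 m2 + br m1 q2 - br m2 q1 \<in> M"
    using m q by (intro subspace_diff[OF MS] subspace_add[OF MS] subalgebra_br[OF M] MQ)
  then have "br m1 m2 + br m1 q2 - br m2 q1 \<in> ?V"
    using subspace_0[OF Q] by force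
  ultimately show "br x y \<in> ?V"
    using subspace_add[OF VS _ QQ[OF q]] by simp
qed

lemma subalgebra_plus_span_eq_UNIV:
  assumes gen: "lie_subalg scale br A = UNIV" and M: "subalgebra M"
    and M_span: "\<And>z q. z \<in> M \<Longrightarrow> q \<in> span B \<Longrightarrow> br z q \<in> M"
    and A: "\<And>a. a \<in> A \<Longrightarrow> \<exists>m\<in>M. a - m \<in> span B"
    and BB: "\<And>b b'. b \<in> B \<Longrightarrow> b' \<in> B \<Longrightarrow> \<exists>m\<in>M. br b b' - m \<in> span B"
  shows "{m + q | m q. m \<in> M \<and> q \<in> span B} = UNIV"
proof -
  let ?V = "{m + q | m q. m \<in> M \<and> q \<in> span B}"
  have V_I: "x \<in> ?V" if "\<exists>m\<in>M. x - m \<in> span B" for x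
    using that by force
  have "subalgebra ?V"
  proof (rule subalgebra_plus_subspace[OF M subspace_span M_span])
    show "br q q' \<in> ?V" if "q \<in> span B" "q' \<in> span B" for q q'
      using br_span_mem[OF subspace_sums[OF subalgebra_subspace[OF M] subspace_span] _ that] V_I BB
      by blast
  qed
  moreover have "A \<subseteq> ?V" using V_I A by blast
  ultimately show ?thesis
    using lie_subalg_least[of A ?V] gen by blast
qed

lemma lie_subalg_extend_finite:
  assumes I: "subalgebra I" and Y: "Y \<subseteq> I" and "finite B"
    and cover: "I \<subseteq> {m + q | m q. m \<in> lie_subalg scale br Y \<and> q \<in> span B}"
  shows "\<exists>C. finite C \<and> C \<subseteq> I \<and> lie_subalg scale br (Y \<union> C) = I"
proof -
  have IS: "subspace I" by (rule subalgebra_subspace[OF I])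
  obtain C where C: "C \<subseteq> I \<inter> span B" "independent C" "I \<inter> span B \<subseteq> span C"
    by (rule basis_exists[of "I \<inter> span B"])
  have "finite C" using independent_span_bound[OF \<open>finite B\<close> C(2)] C(1) by blast
  let ?G = "lie_subalg scale br (Y \<union> C)"
  have YI: "lie_subalg scale br Y \<subseteq> I" by (rule lie_subalg_least[OF Y I])
  have GS: "subspace ?G" by (rule subalgebra_subspace[OF subalgebra_lie_subalg])
  have "I \<subseteq> ?G"
  proof
    fix i assume "i \<in> I"
    then obtain m q where mq: "i = m + q" "m \<in> lie_subalg scale br Y" "q \<in> span B"
      using cover by blast
    have "q \<in> I" using subspace_diff[OF IS \<open>i \<in> I\<close>, of m] mq YI by auto
    then have "q \<in> span C" using C(3) mq(3) by blast
    moreover have "span C \<subseteq> ?G"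
      using span_minimal[OF _ GS] lie_subalg_superset[of "Y \<union> C"] by blast
    moreover have "m \<in> ?G" using mq(2) lie_subalg_mono[of Y "Y \<union> C"] by blast
    ultimately show "i \<in> ?G" using mq(1) subspace_add[OF GS] by blast
  qed
  moreover have "?G \<subseteq> I" using lie_subalg_least[OF _ I, of "Y \<union> C"] Y C(1) by blast
  ultimately show ?thesis using \<open>finite C\<close> C(1) by blast
qed

lemma lie_set_finite_complement:
  assumes gen: "lie_subalg scale br A = UNIV" and codim: "finite_codim scale I" and IS: "subspace I"
  obtains B p where "finite B" "B \<subseteq> lie_set br A" "\<And>v. p v \<in> I" "\<And>v. v - p v \<in> span B"
proof -
  obtain B0 where "finite B0" and B0: "span (I \<union> B0) = UNIV"
    using codim unfolding finite_codim_def by blast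
  have "\<exists>T. finite T \<and> T \<subseteq> lie_set br A \<and> b \<in> span T" for b
  proof -
    have "b \<in> span (lie_set br A)" using lie_subalg_subset_span_lie_set[of A] gen by blast
    then obtain t r where b: "b = (\<Sum>a\<in>t. scale (r a) a)" and t: "finite t" "t \<subseteq> lie_set br A"
      unfolding span_explicit by blast
    have "b \<in> span t" unfolding b by (intro span_sum span_scale span_base)
    with t show ?thesis by blast
  qed
  then obtain T where T: "\<And>b. b \<in> B0 \<Longrightarrow> finite (T b) \<and> T b \<subseteq> lie_set br A \<and> b \<in> span (T b)"
    by metis
  define B where "B = \<Union>(T ` B0)"
  have "B0 \<subseteq> span B"
  proof
    fix b assume "b \<in> B0"
    then have "T b \<subseteq> B" unfolding B_def by blast
    then show "b \<in> span B" using T[OF \<open>b \<in> B0\<close>] span_mono by blast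
  qed
  then have "I \<union> B0 \<subseteq> span (I \<union> B)"
    using span_mono[of B "I \<union> B"] span_superset[of "I \<union> B"] by blast
  then have "span (I \<union> B) = UNIV"
    using span_minimal[OF _ subspace_span] B0 by blast
  have "\<exists>i. i \<in> I \<and> v - i \<in> span B" for v
  proof -
    obtain x y where "v = x + y" "x \<in> span I" "y \<in> span B"
      using \<open>span (I \<union> B) = UNIV\<close> unfolding span_Un by blast
    moreover have "span I = I" using IS by simp
    ultimately show ?thesis by (intro exI[of _ x]) auto
  qed
  then obtain p where "\<And>v. p v \<in> I" "\<And>v. v - p v \<in> span B" by metis
  moreover have "finite B" "B \<subseteq> lie_set br A" unfolding B_def using \<open>finite B0\<close> T by auto
  ultimately show ?thesis using that by blast
qed

theorem lie_ideal_finitely_generated: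
  assumes "finite A" and gen: "lie_subalg scale br A = UNIV"
    and nilpotent: "\<forall>s \<in> lie_set br A. ad_nilpotent br s"
    and ideal: "lie_ideal scale br I" and codim: "finite_codim scale I"
  shows "\<exists>G. finite G \<and> G \<subseteq> I \<and> lie_subalg scale br G = I"
proof -
  have I: "subalgebra I" by (rule lie_ideal_subalgebra[OF ideal])
  obtain B p where "finite B" "B \<subseteq> lie_set br A" and p: "\<And>v. p v \<in> I" "\<And>v. v - p v \<in> span B"
    using lie_set_finite_complement[OF gen codim subalgebra_subspace[OF I]] by blast
  then obtain nn where nn: "\<And>s z. s \<in> B \<Longrightarrow> ((\<lambda>y. br y s) ^^ nn s) z = 0"
    using nilpotent unfolding ad_nilpotent_def by (metis subsetD)
  define X where "X = p ` (A \<union> case_prod br ` (B \<times> B))"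
  define Y where "Y = {ad_word x w | x w. x \<in> X \<and> (set w \<subseteq> B \<and> length w \<le> sum nn B)}"
  define M where "M = lie_subalg scale br Y"
  have M: "subalgebra M" unfolding M_def by (rule subalgebra_lie_subalg)
  have br_decomp: "\<exists>q\<in>X. br a b - q \<in> span B" if "a \<in> B" "b \<in> B" for a b
    using p(2) that unfolding X_def by blast
  have words: "ad_word x w \<in> M" if "x \<in> X" "set w \<subseteq> B" for x w
    using ad_words_mem[OF M br_decomp \<open>finite B\<close> nn _ that] lie_subalg_superset[of Y]
    unfolding M_def Y_def by blast
  have "br y s \<in> M" if "y \<in> Y" "s \<in> B" for y s
    using that words[of _ "_ @ [s]"] unfolding Y_def by auto
  then have "br z q \<in> M" if "z \<in> M" "q \<in> span B" for z q
    using lie_subalg_br_span_closed that unfolding M_def by blast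
  then have cover: "{m + q | m q. m \<in> M \<and> q \<in> span B} = UNIV"
  proof (rule subalgebra_plus_span_eq_UNIV[OF gen M])
    show "\<exists>m\<in>M. a - m \<in> span B" if "a \<in> A" for a
      using words[of "p a" "[]"] p(2)[of a] that unfolding X_def by auto
    show "\<exists>m\<in>M. br b b' - m \<in> span B" if "b \<in> B" "b' \<in> B" for b b'
      using words[of "p (br b b')" "[]"] p(2)[of "br b b'"] that unfolding X_def by auto
  qed
  have Y_I: "Y \<subseteq> I"
    using lie_ideal_ad_word_mem[OF ideal] p(1) unfolding Y_def X_def by blast
  have "I \<subseteq> {m + q | m q. m \<in> lie_subalg scale br Y \<and> q \<in> span B}"
    using cover unfolding M_def by simp
  then obtain C where "finite C" "C \<subseteq> I" "lie_subalg scale br (Y \<union> C) = I"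
    using lie_subalg_extend_finite[OF I Y_I \<open>finite B\<close>] by meson
  moreover have "finite Y"
    unfolding Y_def X_def using \<open>finite A\<close> \<open>finite B\<close>
    by (intro finite_image_set2 finite_lists_length_le) auto
  ultimately show ?thesis using Y_I by (intro exI[of _ "Y \<union> C"]) auto
qed

end

theorem lemma3:
  fixes scale :: "'f::field \<Rightarrow> 'a::ab_group_add \<Rightarrow> 'a"
    and br :: "'a \<Rightarrow> 'a \<Rightarrow> 'a"
    and A :: "'a set" and I :: "'a set"
  assumes "lie_algebra scale br"
    and "finite A"
    and "lie_subalg scale br A = UNIV"
    and "\<forall>s \<in> lie_set br A. ad_nilpotent br s"
    and "lie_ideal scale br I"
    and "finite_codim scale I"
  shows "\<exists>G. finite G \<and> G \<subseteq> I \<and> lie_subalg scale br G = I"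
  using lie_algebra.lie_ideal_finitely_generated[OF assms] .

end
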